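(* Let $A\in\mathbb{R}^{r\times n}$ ($r\le n$) have full row rank with singular values $\sigma_1\ge\dots\ge\sigma_r>0$, let $F\in\mathbb{R}^{K\times n}$ satisfy $FA^T\neq 0$, and let $D^*=FA^T(AA^T)^{-1}$. Define the spectral risk $\gamma=\|D^*\|_F^2\|A\|_F^2/\|D^*A\|_F^2$ and $\tilde\sigma_i^2=\sigma_i^2/\sum_{j=1}^r\sigma_j^2$. Then $\gamma\ge1$ and $$1\le\frac{1}{\tilde\sigma_1^2}\le\gamma\le\frac{1}{\tilde\sigma_r^2}.$$ Moreover $\gamma=1$ if and only if $r=1$.
   Context: $D^*$ is the minimizer of the linear regression problem $\min_D\|F-DA\|_F^2$; $F$ is an arbitrary target matrix. *)

theory Defs
  imports "HOL-Analysis.Analysis"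
begin

definition frob_sq :: "real^'n^'m \<Rightarrow> real" where
  "frob_sq M = (\<Sum>i\<in>UNIV. \<Sum>j\<in>UNIV. (M $ i $ j)^2)"

text \<open>sv 1 \<ge> ... \<ge> sv r (r = number of rows) are the singular values of A,
  i.e. their squares are the eigenvalues (with multiplicity) of A A^T:
  A A^T = U diag(sv^2) U^T for some orthogonal U, after some enumeration e of the row index type.\<close>
definition singular_values :: "real^'n^'r \<Rightarrow> (nat \<Rightarrow> real) \<Rightarrow> bool" where
  "singular_values A sv \<longleftrightarrow>
     (\<forall>i\<in>{1..<CARD('r)}. sv (Suc i) \<le> sv i) \<and>
     (\<forall>i\<in>{1..CARD('r)}. 0 \<le> sv i) \<and>
     (\<exists>(e::'r \<Rightarrow> nat) (U::real^'r^'r). bij_betw e UNIV {1..CARD('r)} \<and> orthogonal_matrix U \<and>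
        A ** transpose A = U ** (\<chi> i j. if i = j then (sv (e i))^2 else 0) ** transpose U)"

end

theory Submission imports Defs begin

text \<open>Diagonalise \<open>A A\<^sup>T = U \<Lambda> U\<^sup>T\<close> and put \<open>W = D U\<close>. If \<open>c\<^sub>k\<close> is the squared norm of the
  \<open>k\<close>-th column of \<open>W\<close>, then \<open>\<parallel>D\<parallel>\<^sup>2 = \<Sum> c\<^sub>k\<close>, \<open>\<parallel>D A\<parallel>\<^sup>2 = \<Sum> \<lambda>\<^sub>k c\<^sub>k\<close> and
  \<open>\<parallel>A\<parallel>\<^sup>2 = \<Sum> \<lambda>\<^sub>k\<close>, so \<open>\<gamma>\<close> is \<open>\<parallel>A\<parallel>\<^sup>2\<close> divided by a weighted mean of the eigenvalues
  \<open>\<lambda>\<^sub>k = \<sigma>\<^sub>k\<^sup>2\<close>. It therefore lies between \<open>\<parallel>A\<parallel>\<^sup>2/\<sigma>\<^sub>1\<^sup>2\<close> and \<open>\<parallel>A\<parallel>\<^sup>2/\<sigma>\<^sub>r\<^sup>2\<close>, which are the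
  stated bounds because \<open>\<parallel>A\<parallel>\<^sup>2 = \<Sum> \<sigma>\<^sub>j\<^sup>2\<close>. The lower bound is at least \<open>1\<close>, with equality only if \<open>r = 1\<close>, in which
  case both bounds equal \<open>1\<close>.\<close>

definition diag_mat :: "('n \<Rightarrow> 'a::zero) \<Rightarrow> 'a^'n^'n" where
  "diag_mat l = (\<chi> i j. if i = j then l i else 0)"

lemma matrix_mul_diag_mat_component:
  "(M ** diag_mat l) $ i $ j = M $ i $ j * (l j :: 'a::semiring_1)"
  unfolding matrix_matrix_mult_def diag_mat_def by (simp add: if_distrib cong: if_cong)

lemma diag_mat_mult_diag_mat: "diag_mat l ** diag_mat l' = diag_mat (\<lambda>i. l i * (l' i :: 'a::semiring_1))"
  by (simp add: vec_eq_iff matrix_mul_diag_mat_component) (simp add: diag_mat_def)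

lemma diag_mat_one: "diag_mat (\<lambda>_. 1) = mat 1"
  by (simp add: diag_mat_def mat_def)

lemma matrix_mul_left_zero: "0 ** B = (0 :: 'a::semiring_1^'n^'m)"
  by (simp add: matrix_matrix_mult_def vec_eq_iff)

lemma frob_sq_eq_trace: "frob_sq M = (\<Sum>i\<in>UNIV. (M ** transpose M) $ i $ i)"
  unfolding frob_sq_def matrix_matrix_mult_def transpose_def by (simp add: power2_eq_square)

lemma frob_sq_mult_orthogonal:
  assumes "orthogonal_matrix U"
  shows "frob_sq (M ** U) = frob_sq M"
proof -
  have "(M ** U) ** transpose (M ** U) = M ** (U ** transpose U) ** transpose M"
    by (simp add: matrix_transpose_mul matrix_mul_assoc)
  then have "(M ** U) ** transpose (M ** U) = M ** transpose M"
    using assms by (simp add: orthogonal_matrix_def)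
  then show ?thesis by (simp add: frob_sq_eq_trace)
qed

lemma frob_sq_eq_sum_column_norms: "frob_sq M = (\<Sum>k\<in>UNIV. \<Sum>i\<in>UNIV. (M $ i $ k)\<^sup>2)"
  unfolding frob_sq_def by (rule sum.swap)

lemma trace_diag_congruence:
  "(\<Sum>i\<in>UNIV. (W ** diag_mat l ** transpose W) $ i $ i)
     = (\<Sum>k\<in>UNIV. l k * (\<Sum>i\<in>UNIV. (W $ i $ k)\<^sup>2 :: real))"
proof -
  have "(W ** diag_mat l ** transpose W) $ i $ i = (\<Sum>k\<in>UNIV. l k * (W $ i $ k)\<^sup>2)" for i
    unfolding matrix_matrix_mult_def[of "W ** _"]
    by (simp add: matrix_mul_diag_mat_component transpose_def power2_eq_square mult_ac)
  then have "(\<Sum>i\<in>UNIV. (W ** diag_mat l ** transpose W) $ i $ i)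
      = (\<Sum>i\<in>UNIV. \<Sum>k\<in>UNIV. l k * (W $ i $ k)\<^sup>2)"
    by simp
  also have "\<dots> = (\<Sum>k\<in>UNIV. \<Sum>i\<in>UNIV. l k * (W $ i $ k)\<^sup>2)"
    by (rule sum.swap)
  finally show ?thesis
    by (simp add: sum_distrib_left)
qed

lemma frob_sq_mult_spectral:
  assumes "B ** transpose B = U ** diag_mat l ** transpose U"
  shows "frob_sq (M ** B) = (\<Sum>k\<in>UNIV. l k * (\<Sum>i\<in>UNIV. ((M ** U) $ i $ k)\<^sup>2))"
proof -
  have "(M ** B) ** transpose (M ** B) = M ** (B ** transpose B) ** transpose M"
    by (simp add: matrix_transpose_mul matrix_mul_assoc)
  also have "\<dots> = (M ** U) ** diag_mat l ** transpose (M ** U)"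
    by (simp add: assms matrix_transpose_mul matrix_mul_assoc)
  finally show ?thesis
    by (simp add: frob_sq_eq_trace trace_diag_congruence)
qed

lemma orthogonal_matrix_column_norm:
  assumes "orthogonal_matrix (U :: real^'n^'n)"
  shows "(\<Sum>i\<in>UNIV. (U $ i $ k)\<^sup>2) = 1"
proof -
  have "(transpose U ** U) $ k $ k = 1"
    using assms by (simp add: orthogonal_matrix_def mat_def)
  then show ?thesis
    unfolding matrix_matrix_mult_def transpose_def by (simp add: power2_eq_square)
qed

lemma frob_sq_spectral:
  assumes "orthogonal_matrix U" and "B ** transpose B = U ** diag_mat l ** transpose U"
  shows "frob_sq B = sum l UNIV"
  using frob_sq_mult_spectral[OF assms(2), of "mat 1"] orthogonal_matrix_column_norm[OF assms(1)]
  by simp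

lemma invertible_orthogonal_diag_congruence:
  assumes "orthogonal_matrix (U :: real^'n^'n)" and "\<And>k. l k \<noteq> 0"
  shows "invertible (U ** diag_mat l ** transpose U)"
proof -
  have "(U ** diag_mat l ** transpose U) ** (U ** diag_mat (\<lambda>k. 1 / l k) ** transpose U)
          = U ** (diag_mat l ** (transpose U ** U) ** diag_mat (\<lambda>k. 1 / l k)) ** transpose U"
    by (simp add: matrix_mul_assoc)
  also have "\<dots> = mat 1"
    using assms by (simp add: orthogonal_matrix_def diag_mat_mult_diag_mat diag_mat_one)
  finally show ?thesis
    unfolding invertible_def using matrix_left_right_inverse by blast
qed

lemma weighted_sum_bounds:
  fixes l c :: "'a \<Rightarrow> real"
  assumes "\<And>k. k \<in> K \<Longrightarrow> m \<le> l k \<and> l k \<le> M" and "\<And>k. k \<in> K \<Longrightarrow> 0 \<le> c k"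
  shows "m * sum c K \<le> (\<Sum>k\<in>K. l k * c k)" and "(\<Sum>k\<in>K. l k * c k) \<le> M * sum c K"
  unfolding sum_distrib_left using assms by (auto intro!: sum_mono mult_right_mono)

lemma ratio_bounds:
  fixes C S Q m M :: real
  assumes "0 < C" and "0 < m" and "m * C \<le> Q" and "Q \<le> M * C" and "0 \<le> S"
  shows "S / M \<le> C * S / Q" and "C * S / Q \<le> S / m"
proof -
  have "0 < Q"
    using assms by (smt (verit) mult_pos_pos)
  moreover have "0 < M"
    using assms by (smt (verit) mult_le_cancel_right)
  moreover have "m * C * S \<le> Q * S" and "Q * S \<le> M * C * S"
    using assms by (simp_all add: mult_right_mono)
  ultimately show "S / M \<le> C * S / Q" and "C * S / Q \<le> S / m"
    using assms by (simp_all add: divide_simps mult_ac)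
qed

lemma frob_sq_ratio_bounds:
  fixes A :: "real^'n^'r" and D :: "real^'r^'k"
  assumes "orthogonal_matrix U" and "A ** transpose A = U ** diag_mat l ** transpose U"
    and "0 < m" and "\<And>k. m \<le> l k \<and> l k \<le> M" and "D \<noteq> 0"
  shows "frob_sq A / M \<le> frob_sq D * frob_sq A / frob_sq (D ** A)"
    and "frob_sq D * frob_sq A / frob_sq (D ** A) \<le> frob_sq A / m"
proof -
  define c where "c k = (\<Sum>i\<in>UNIV. ((D ** U) $ i $ k)\<^sup>2)" for k
  have c_nonneg: "0 \<le> c k" for k
    unfolding c_def by (simp add: sum_nonneg)
  have "D ** U \<noteq> 0"
    using assms(1,5) by (metis matrix_mul_assoc matrix_mul_rid orthogonal_matrix_def matrix_mul_left_zero)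
  then obtain i k where "(D ** U) $ i $ k \<noteq> 0"
    by (metis vec_eq_iff zero_index)
  then have "0 < c k"
    unfolding c_def by (intro sum_pos2[of _ i]) auto
  then have C_pos: "0 < sum c UNIV"
    using c_nonneg by (intro sum_pos2[of _ k]) auto
  have D_eq: "frob_sq D = sum c UNIV"
    using frob_sq_mult_orthogonal[OF assms(1), of D] by (simp add: c_def frob_sq_eq_sum_column_norms)
  have DA_eq: "frob_sq (D ** A) = (\<Sum>k\<in>UNIV. l k * c k)"
    using frob_sq_mult_spectral[OF assms(2)] by (simp add: c_def)
  have "m * sum c UNIV \<le> frob_sq (D ** A)" "frob_sq (D ** A) \<le> M * sum c UNIV"
    unfolding DA_eq using weighted_sum_bounds[of UNIV m l M c] assms(4) c_nonneg by auto
  moreover have "0 \<le> frob_sq A"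
    by (simp add: frob_sq_def sum_nonneg)
  ultimately show "frob_sq A / M \<le> frob_sq D * frob_sq A / frob_sq (D ** A)"
    and "frob_sq D * frob_sq A / frob_sq (D ** A) \<le> frob_sq A / m"
    unfolding D_eq using ratio_bounds[OF C_pos assms(3)] by auto
qed

lemma decreasing_steps_imp_le:
  assumes "\<forall>i\<in>{1..<N}. s (Suc i) \<le> (s i :: 'a::preorder)" and "1 \<le> i" and "i \<le> j" and "j \<le> N"
  shows "s j \<le> s i"
  using assms(3,4)
proof (induction j rule: dec_induct)
  case base
  then show ?case by simp
next
  case (step j)
  then have "s (Suc j) \<le> s j"
    using assms(1,2) by simp
  with step show ?case
    using order_trans by fastforce
qed

lemma singular_values_spectral_decomposition:
  fixes A :: "real^'n^'r"
  assumes "singular_values A sv"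
  obtains U :: "real^'r^'r" and l
  where "orthogonal_matrix U" and "A ** transpose A = U ** diag_mat l ** transpose U"
    and "\<And>k. (sv CARD('r))\<^sup>2 \<le> l k \<and> l k \<le> (sv 1)\<^sup>2"
    and "sum l UNIV = (\<Sum>j=1..CARD('r). (sv j)\<^sup>2)"
proof -
  obtain e :: "'r \<Rightarrow> nat" and U :: "real^'r^'r"
    where e: "bij_betw e UNIV {1..CARD('r)}" and "orthogonal_matrix U"
      and AU: "A ** transpose A = U ** diag_mat (\<lambda>k. (sv (e k))\<^sup>2) ** transpose U"
    using assms unfolding singular_values_def diag_mat_def by blast
  have "(sv CARD('r))\<^sup>2 \<le> (sv (e k))\<^sup>2 \<and> (sv (e k))\<^sup>2 \<le> (sv 1)\<^sup>2" for k
  proof -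
    have ek: "e k \<in> {1..CARD('r)}"
      using e bij_betwE by blast
    then have "sv CARD('r) \<le> sv (e k)" "sv (e k) \<le> sv 1"
      using assms decreasing_steps_imp_le[of "CARD('r)" sv] unfolding singular_values_def by auto
    moreover have "0 \<le> sv CARD('r)"
      using assms unfolding singular_values_def by (simp add: Suc_leI)
    ultimately show ?thesis
      by (meson order_trans power_mono)
  qed
  moreover have "(\<Sum>k\<in>UNIV. (sv (e k))\<^sup>2) = (\<Sum>j=1..CARD('r). (sv j)\<^sup>2)"
    using sum.reindex_bij_betw[OF e] by simp
  ultimately show ?thesis
    using that \<open>orthogonal_matrix U\<close> AU by blast
qed

lemma sum_div_first_ge_one:
  fixes s :: "nat \<Rightarrow> real"
  assumes "1 \<le> N" and "\<And>j. j \<in> {1..N} \<Longrightarrow> 0 < s j"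
  shows "1 \<le> (\<Sum>j=1..N. s j) / s 1" and "(\<Sum>j=1..N. s j) / s 1 = 1 \<longleftrightarrow> N = 1"
proof -
  have split: "(\<Sum>j=1..N. s j) = s 1 + (\<Sum>j=2..N. s j)"
    using assms(1) by (simp add: sum.atLeast_Suc_atMost numeral_2_eq_2)
  have "0 < s 1"
    using assms by simp
  moreover have "0 \<le> (\<Sum>j=2..N. s j)"
    using assms(2) by (intro sum_nonneg) (simp add: less_imp_le)
  moreover have "0 < (\<Sum>j=2..N. s j)" if "N \<noteq> 1"
    using assms that by (intro sum_pos2[of _ 2]) (auto simp: less_imp_le)
  ultimately show "1 \<le> (\<Sum>j=1..N. s j) / s 1" and "(\<Sum>j=1..N. s j) / s 1 = 1 \<longleftrightarrow> N = 1"
    unfolding split by (force simp: field_simps)+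
qed

lemma matrix_inv_mult_left:
  assumes "invertible M"
  shows "matrix_inv M ** M = mat 1"
  using someI_ex[OF assms[unfolded invertible_def]] unfolding matrix_inv_def by blast

lemma matrix_mult_matrix_inv_nonzero:
  assumes "invertible G" and "B \<noteq> 0"
  shows "B ** matrix_inv G \<noteq> 0"
proof
  assume "B ** matrix_inv G = 0"
  then have "B ** (matrix_inv G ** G) = 0"
    by (simp add: matrix_mul_assoc matrix_mul_left_zero)
  with assms show False
    by (simp add: matrix_inv_mult_left)
qed

theorem proposition4:
  fixes A :: "real^'n^'r" and F :: "real^'n^'k" and sv :: "nat \<Rightarrow> real"
  assumes "CARD('r) \<le> CARD('n)"
    and "rank A = CARD('r)"
    and "singular_values A sv"
    and "\<forall>i\<in>{1..CARD('r)}. sv i > 0"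
    and "F ** transpose A \<noteq> 0"
  shows "let D = F ** transpose A ** matrix_inv (A ** transpose A);
             \<gamma> = frob_sq D * frob_sq A / frob_sq (D ** A);
             st = (\<lambda>i. (sv i)^2 / (\<Sum>j=1..CARD('r). (sv j)^2))
         in \<gamma> \<ge> 1 \<and> 1 \<le> 1 / st 1 \<and> 1 / st 1 \<le> \<gamma> \<and> \<gamma> \<le> 1 / st (CARD('r)) \<and>
            (\<gamma> = 1 \<longleftrightarrow> CARD('r) = 1)"
proof -
  define N where "N = CARD('r)"
  define S where "S = (\<Sum>j=1..N. (sv j)\<^sup>2)"
  define D where "D = F ** transpose A ** matrix_inv (A ** transpose A)"
  define \<gamma> where "\<gamma> = frob_sq D * frob_sq A / frob_sq (D ** A)"
  obtain U l where U: "orthogonal_matrix U" and AU: "A ** transpose A = U ** diag_mat l ** transpose U"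
    and l: "\<And>k. (sv N)\<^sup>2 \<le> l k \<and> l k \<le> (sv 1)\<^sup>2" and "sum l UNIV = S"
    using singular_values_spectral_decomposition[OF assms(3)] unfolding N_def S_def by metis
  have "1 \<le> N"
    by (simp add: N_def Suc_leI)
  have sv_sq_pos: "0 < (sv j)\<^sup>2" if "j \<in> {1..N}" for j
    using assms(4) that unfolding N_def by (blast intro: zero_less_power)
  have "invertible (A ** transpose A)"
    unfolding AU using invertible_orthogonal_diag_congruence[OF U] l sv_sq_pos[of N] \<open>1 \<le> N\<close>
    by (metis atLeastAtMost_iff order.refl not_le)
  then have "D \<noteq> 0"
    unfolding D_def using assms(5) by (rule matrix_mult_matrix_inv_nonzero)
  then have bounds: "S / (sv 1)\<^sup>2 \<le> \<gamma>" "\<gamma> \<le> S / (sv N)\<^sup>2"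
    using frob_sq_ratio_bounds[OF U AU _ l] frob_sq_spectral[OF U AU] \<open>sum l UNIV = S\<close>
      sv_sq_pos[of N] \<open>1 \<le> N\<close> unfolding \<gamma>_def by simp_all
  note ratio = sum_div_first_ge_one[where s = "\<lambda>j. (sv j)\<^sup>2", OF \<open>1 \<le> N\<close> sv_sq_pos, folded S_def]
  have "\<gamma> = 1 \<longleftrightarrow> N = 1"
  proof
    assume "\<gamma> = 1"
    then show "N = 1"
      using bounds(1) ratio by (metis order_antisym)
  next
    assume "N = 1"
    then have "S / (sv N)\<^sup>2 = S / (sv 1)\<^sup>2" and "S / (sv 1)\<^sup>2 = 1"
      using ratio(2) by auto
    then show "\<gamma> = 1"
      using bounds by linarith
  qed
  then show ?thesis
    using bounds ratio
    unfolding Let_def N_def[symmetric] S_def[symmetric] D_def[symmetric] \<gamma>_def[symmetric]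
    by simp
qed

end
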